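(* Let $\Phi(x,y)=-\phi(x-y)$ and let $f:\mathbb R^n\to\mathbb R$ be continuously differentiable. Then $f$ is a-weakly convex if and only if $f$ is left $\Phi$-convex.
   Context: Standing assumption: $\phi:\mathbb R^n\to\mathbb R$ is convex, finite-valued, differentiable and strictly convex (Legendre with full domain), super-coercive; $\phi^*$ has the same properties and $\nabla\phi^*=(\nabla\phi)^{-1}$. A proper lsc $f$ is a-weakly convex if for every $(\bar x,\bar v)\in\operatorname{graph}\partial f$ ($\partial f$ the limiting subdifferential): $f(x)\ge f(\bar x)-\phi(x-\bar x+\nabla\phi^*(-\bar v))+\phi(\nabla\phi^*(-\bar v))$ for all $x$. Left $\Phi$-convex: $f=\sup_{i\in I}\Phi(\cdot,y_i)-\beta_i$ for some family $(y_i,\beta_i)\in\mathbb R^n\times\overline{\mathbb R}$. *)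

theory Defs
  imports "HOL-Analysis.Analysis" "HOL-Library.Extended_Real"
begin

definition strictly_convex :: "('a::real_vector \<Rightarrow> real) \<Rightarrow> bool" where
  "strictly_convex \<phi> \<longleftrightarrow> (\<forall>x y t. x \<noteq> y \<longrightarrow> 0 < t \<longrightarrow> t < 1 \<longrightarrow>
      \<phi> ((1 - t) *\<^sub>R x + t *\<^sub>R y) < (1 - t) * \<phi> x + t * \<phi> y)"

definition super_coercive :: "('a::real_normed_vector \<Rightarrow> real) \<Rightarrow> bool" where
  "super_coercive \<phi> \<longleftrightarrow> filterlim (\<lambda>x. \<phi> x / norm x) at_top at_infinity"

definition grad :: "('a::euclidean_space \<Rightarrow> real) \<Rightarrow> 'a \<Rightarrow> 'a" where
  "grad f x = (SOME g. (f has_derivative (\<lambda>h. g \<bullet> h)) (at x))"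

text \<open>Legendre function with full domain: finite-valued (automatic), convex,
  differentiable everywhere, strictly convex, and super-coercive.\<close>
definition legendre_full :: "('a::euclidean_space \<Rightarrow> real) \<Rightarrow> bool" where
  "legendre_full \<phi> \<longleftrightarrow> convex_on UNIV \<phi> \<and> (\<forall>x. \<phi> differentiable (at x))
     \<and> strictly_convex \<phi> \<and> super_coercive \<phi>"

text \<open>Convex (Fenchel) conjugate; under the standing assumptions the supremum is finite.\<close>
definition fconj :: "('a::euclidean_space \<Rightarrow> real) \<Rightarrow> 'a \<Rightarrow> real" where
  "fconj \<phi> v = (SUP x. v \<bullet> x - \<phi> x)"

definition standing :: "('a::euclidean_space \<Rightarrow> real) \<Rightarrow> bool" where
  "standing \<phi> \<longleftrightarrow> legendre_full \<phi> \<and> legendre_full (fconj \<phi>)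
     \<and> bij (grad \<phi>) \<and> grad (fconj \<phi>) = inv (grad \<phi>)"

definition frechet_subdiff :: "('a::euclidean_space \<Rightarrow> real) \<Rightarrow> 'a \<Rightarrow> 'a set" where
  "frechet_subdiff f x = {v. \<forall>\<epsilon>>0. \<forall>\<^sub>F y in at x.
      f y \<ge> f x + v \<bullet> (y - x) - \<epsilon> * norm (y - x)}"

definition limiting_subdiff :: "('a::euclidean_space \<Rightarrow> real) \<Rightarrow> 'a \<Rightarrow> 'a set" where
  "limiting_subdiff f x = {v. \<exists>xs vs. xs \<longlonglongrightarrow> x \<and> (\<lambda>k. f (xs k)) \<longlonglongrightarrow> f x
      \<and> vs \<longlonglongrightarrow> v \<and> (\<forall>k. vs k \<in> frechet_subdiff f (xs k))}"

definition a_weakly_convex :: "('a::euclidean_space \<Rightarrow> real) \<Rightarrow> ('a \<Rightarrow> real) \<Rightarrow> bool" where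
  "a_weakly_convex \<phi> f \<longleftrightarrow> (\<forall>xb vb. vb \<in> limiting_subdiff f xb \<longrightarrow> (\<forall>x.
      f x \<ge> f xb - \<phi> (x - xb + grad (fconj \<phi>) (- vb)) + \<phi> (grad (fconj \<phi>) (- vb))))"

definition Phi :: "('a::euclidean_space \<Rightarrow> real) \<Rightarrow> 'a \<Rightarrow> 'a \<Rightarrow> real" where
  "Phi \<phi> x y = - \<phi> (x - y)"

text \<open>Left Phi-convexity: f is a pointwise supremum of Phi(., y_i) - beta_i over some
  family (y_i, beta_i) in R^n x extended reals; the family is represented by its set
  of pairs.\<close>
definition left_Phi_convex :: "('a \<Rightarrow> 'a \<Rightarrow> real) \<Rightarrow> ('a \<Rightarrow> real) \<Rightarrow> bool" where
  "left_Phi_convex \<Phi> f \<longleftrightarrow> (\<exists>S :: ('a \<times> ereal) set.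
      \<forall>x. ereal (f x) = (SUP p\<in>S. ereal (\<Phi> x (fst p)) - snd p))"

end

theory Submission
  imports Defs
begin

text \<open>For continuously differentiable f the limiting subdifferential at x is just the gradient, so
  a-weak convexity says that every point x carries the minorant
  x' \<mapsto> f x - \<phi> (x' - x + z) + \<phi> z, a translate of \<Phi>(\<cdot>, x - z), touching f at x, with
  z = \<nabla>\<phi>*(-\<nabla>f x). The supremum of these minorants is f, which is left \<Phi>-convexity.
  Conversely, the supremum representation provides such minorants touching f at x up
  to any \<epsilon> > 0; super-coercivity of \<phi> bounds their parameters z, so a compactness
  argument produces an exactly touching one, and Fermat's rule at the contact point
  gives \<nabla>f x = -\<nabla>\<phi> z, i.e. z = \<nabla>\<phi>*(-\<nabla>f x).\<close>

lemma grad_has_derivative: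
  fixes \<phi> :: "'a::euclidean_space \<Rightarrow> real"
  assumes "\<phi> differentiable (at x)"
  shows "(\<phi> has_derivative (\<lambda>h. grad \<phi> x \<bullet> h)) (at x)"
proof -
  obtain D where D: "(\<phi> has_derivative D) (at x)"
    using assms differentiable_def by blast
  have "linear D"
    using D has_derivative_linear by blast
  then have "D = (\<lambda>h. adjoint D 1 \<bullet> h)"
    using adjoint_works[of D _ 1] by (auto simp: inner_commute)
  then have "\<exists>g. (\<phi> has_derivative (\<lambda>h. g \<bullet> h)) (at x)"
    using D by metis
  then show ?thesis
    unfolding grad_def by (rule someI_ex)
qed

lemma inner_eventually_ge_imp_zero:
  fixes w x :: "'a::real_inner"
  assumes "\<forall>\<epsilon>>0. \<forall>\<^sub>F y in at x. - \<epsilon> * norm (y - x) \<le> w \<bullet> (y - x)"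
  shows "w = 0"
proof (rule ccontr)
  assume "w \<noteq> 0"
  then have w: "norm w > 0" by simp
  have lim: "filterlim (\<lambda>t. x - t *\<^sub>R w) (at x) (at_right 0)"
  proof (rule filterlim_atI)
    show "((\<lambda>t. x - t *\<^sub>R w) \<longlongrightarrow> x) (at_right 0)"
      by (auto intro!: tendsto_eq_intros)
    show "\<forall>\<^sub>F t in at_right 0. x - t *\<^sub>R w \<noteq> x"
      using eventually_at_right_less[of 0] by eventually_elim (use \<open>w \<noteq> 0\<close> in auto)
  qed
  have "\<forall>\<^sub>F y in at x. - (norm w / 2) * norm (y - x) \<le> w \<bullet> (y - x)"
    using assms w half_gt_zero by blast
  from eventually_compose_filterlim[OF this lim] eventually_at_right_less[of 0]
  have "\<forall>\<^sub>F t in at_right 0. t > 0 \<and> - (norm w / 2) * norm (- t *\<^sub>R w) \<le> w \<bullet> (- t *\<^sub>R w)"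
    by eventually_elim simp
  then obtain t :: real where "t > 0" "- (norm w / 2) * (t * norm w) \<le> - t * (w \<bullet> w)"
    using eventually_happens'[OF trivial_limit_at_right_real] by fastforce
  then show False
    using w by (simp add: dot_square_norm flip: power2_eq_square)
qed

lemma has_derivative_inner_eventually:
  fixes f :: "'a::euclidean_space \<Rightarrow> real"
  assumes "(f has_derivative (\<lambda>h. g \<bullet> h)) (at x)" and "\<epsilon> > 0"
  shows "\<forall>\<^sub>F y in at x. \<bar>f y - f x - g \<bullet> (y - x)\<bar> \<le> \<epsilon> * norm (y - x)"
  using assms unfolding has_derivative_within_alt2 by simp

lemma frechet_subdiff_has_derivative:
  fixes f :: "'a::euclidean_space \<Rightarrow> real"
  assumes f': "(f has_derivative (\<lambda>h. g \<bullet> h)) (at x)"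
  shows "frechet_subdiff f x = {g}"
proof (intro equalityI subsetI)
  fix v assume v: "v \<in> frechet_subdiff f x"
  have "g - v = 0"
  proof (rule inner_eventually_ge_imp_zero[where x = x], intro allI impI)
    fix \<epsilon> :: real assume "\<epsilon> > 0"
    then have "\<epsilon> / 2 > 0" by simp
    have "\<forall>\<^sub>F y in at x. f x + v \<bullet> (y - x) - \<epsilon> / 2 * norm (y - x) \<le> f y"
      using v \<open>\<epsilon> / 2 > 0\<close> unfolding frechet_subdiff_def by blast
    with has_derivative_inner_eventually[OF f' \<open>\<epsilon> / 2 > 0\<close>]
    show "\<forall>\<^sub>F y in at x. - \<epsilon> * norm (y - x) \<le> (g - v) \<bullet> (y - x)"
      by eventually_elim (simp only: inner_diff_left abs_le_iff, linarith)
  qed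
  then show "v \<in> {g}" by simp
next
  fix v assume "v \<in> {g}"
  have "\<forall>\<^sub>F y in at x. f x + g \<bullet> (y - x) - \<epsilon> * norm (y - x) \<le> f y" if "\<epsilon> > 0" for \<epsilon>
    using has_derivative_inner_eventually[OF f' that] by eventually_elim (simp add: abs_le_iff)
  with \<open>v \<in> {g}\<close> show "v \<in> frechet_subdiff f x"
    unfolding frechet_subdiff_def by simp
qed

lemma limiting_subdiff_continuous_grad:
  fixes f :: "'a::euclidean_space \<Rightarrow> real"
  assumes f': "\<forall>x. (f has_derivative (\<lambda>h. g x \<bullet> h)) (at x)" and "continuous_on UNIV g"
  shows "limiting_subdiff f x = {g x}"
proof (intro equalityI subsetI)
  fix v assume "v \<in> limiting_subdiff f x"
  then obtain xs vs where xs: "xs \<longlonglongrightarrow> x" and vs: "vs \<longlonglongrightarrow> v"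
    and "\<forall>k. vs k \<in> frechet_subdiff f (xs k)"
    unfolding limiting_subdiff_def by blast
  then have "vs = g \<circ> xs"
    using frechet_subdiff_has_derivative[OF f'[rule_format]] by (simp add: fun_eq_iff)
  moreover have "(g \<circ> xs) \<longlonglongrightarrow> g x"
    using continuous_on_tendsto_compose[OF assms(2) xs] by (simp add: o_def)
  ultimately show "v \<in> {g x}"
    using vs LIMSEQ_unique by simp
next
  fix v assume "v \<in> {g x}"
  then have "v \<in> frechet_subdiff f x"
    using frechet_subdiff_has_derivative[OF f'[rule_format]] by simp
  then show "v \<in> limiting_subdiff f x"
    unfolding limiting_subdiff_def mem_Collect_eq
    by (intro exI[of _ "\<lambda>k. x"] exI[of _ "\<lambda>k. v"]) simp
qed

text \<open>The \<Phi>(\<cdot>, xb - z)-minorant normalised to agree with f at xb lies below f up to \<epsilon>.\<close>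
definition phi_support :: "('a::real_vector \<Rightarrow> real) \<Rightarrow> ('a \<Rightarrow> real) \<Rightarrow> 'a \<Rightarrow> real \<Rightarrow> 'a \<Rightarrow> bool"
  where "phi_support \<phi> f xb \<epsilon> z \<longleftrightarrow> (\<forall>x. f xb - \<phi> (x - xb + z) + \<phi> z - \<epsilon> \<le> f x)"

lemma phi_support_mono: "phi_support \<phi> f xb \<epsilon> z \<Longrightarrow> \<epsilon> \<le> \<epsilon>' \<Longrightarrow> phi_support \<phi> f xb \<epsilon>' z"
  unfolding phi_support_def by (meson diff_left_mono order_trans)

lemma a_weakly_convex_iff_phi_support:
  "a_weakly_convex \<phi> f \<longleftrightarrow>
     (\<forall>xb vb. vb \<in> limiting_subdiff f xb \<longrightarrow> phi_support \<phi> f xb 0 (grad (fconj \<phi>) (- vb)))"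
  unfolding a_weakly_convex_def phi_support_def by simp

lemma left_Phi_convex_if_phi_support:
  fixes \<phi> f :: "'a::euclidean_space \<Rightarrow> real"
  assumes "\<forall>xb. phi_support \<phi> f xb 0 (z xb)"
  shows "left_Phi_convex (Phi \<phi>) f"
proof -
  define p where "p xb = (xb - z xb, ereal (- f xb - \<phi> (z xb)))" for xb
  have minorant: "ereal (Phi \<phi> x (fst (p xb))) - snd (p xb) = ereal (f xb - \<phi> (x - xb + z xb) + \<phi> (z xb))"
    for x xb
    by (simp add: p_def Phi_def algebra_simps)
  have "ereal (f x) = (SUP xb. ereal (Phi \<phi> x (fst (p xb))) - snd (p xb))" for x
    unfolding minorant
  proof (rule antisym)
    show "ereal (f x) \<le> (SUP xb. ereal (f xb - \<phi> (x - xb + z xb) + \<phi> (z xb)))"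
      by (rule SUP_upper2[of x]) simp_all
    show "(SUP xb. ereal (f xb - \<phi> (x - xb + z xb) + \<phi> (z xb))) \<le> ereal (f x)"
      using assms by (intro SUP_least) (simp add: phi_support_def)
  qed
  then show ?thesis
    unfolding left_Phi_convex_def by (auto simp: image_image intro!: exI[of _ "range p"])
qed

lemma left_Phi_convex_imp_approx_phi_support:
  fixes \<phi> f :: "'a::euclidean_space \<Rightarrow> real"
  assumes "left_Phi_convex (Phi \<phi>) f" and "\<epsilon> > 0"
  shows "\<exists>z. phi_support \<phi> f xb \<epsilon> z"
proof -
  obtain S where S: "\<And>x. ereal (f x) = (SUP p\<in>S. ereal (Phi \<phi> x (fst p)) - snd p)"
    using assms(1) unfolding left_Phi_convex_def by blast
  have "ereal (f xb - \<epsilon>) < (SUP p\<in>S. ereal (Phi \<phi> xb (fst p)) - snd p)"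
    unfolding S[symmetric] using assms(2) by simp
  then obtain p where "p \<in> S" and p_xb: "ereal (f xb - \<epsilon>) < ereal (Phi \<phi> xb (fst p)) - snd p"
    by (auto simp: less_SUP_iff)
  have p_le: "ereal (Phi \<phi> x (fst p)) - snd p \<le> ereal (f x)" for x
    unfolding S[of x] using \<open>p \<in> S\<close> by (rule SUP_upper)
  obtain b where b: "snd p = ereal b"
    using p_xb p_le[of xb] by (cases "snd p") auto
  have "phi_support \<phi> f xb \<epsilon> (xb - fst p)"
    unfolding phi_support_def
  proof
    fix x
    have "x - xb + (xb - fst p) = x - fst p" by simp
    then show "f xb - \<phi> (x - xb + (xb - fst p)) + \<phi> (xb - fst p) - \<epsilon> \<le> f x"
      using p_xb p_le[of x] by (simp add: b Phi_def)
  qed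
  then show ?thesis ..
qed

lemma convex_on_slope_le:
  fixes \<phi> :: "'a::real_normed_vector \<Rightarrow> real"
  assumes "convex_on UNIV \<phi>" and "1 \<le> norm z"
  shows "\<phi> z / norm z \<le> \<phi> z - \<phi> (z - z /\<^sub>R norm z) + \<bar>\<phi> 0\<bar>"
proof -
  define t where "t = 1 / norm z"
  have t: "0 \<le> t" "t \<le> 1"
    using assms(2) by (auto simp: t_def divide_le_eq)
  have "z - z /\<^sub>R norm z = (1 - t) *\<^sub>R z + t *\<^sub>R 0"
    by (simp add: t_def scaleR_diff_left inverse_eq_divide)
  then have "\<phi> (z - z /\<^sub>R norm z) \<le> (1 - t) * \<phi> z + t * \<phi> 0"
    using convex_onD[OF assms(1) t] by (metis UNIV_I)
  moreover have "t * \<phi> 0 \<le> \<bar>\<phi> 0\<bar>"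
    using mult_left_mono[OF abs_ge_self t(1)] mult_left_le_one_le[OF abs_ge_zero t]
    by (rule order_trans)
  ultimately show ?thesis
    by (simp add: t_def algebra_simps)
qed

lemma super_coercive_bounded:
  assumes "super_coercive \<phi>"
  shows "\<exists>R. \<forall>z. \<phi> z / norm z \<le> K \<longrightarrow> norm z \<le> R"
proof -
  have "\<forall>\<^sub>F z in at_infinity. K < \<phi> z / norm z"
    using assms unfolding super_coercive_def filterlim_at_top_dense by blast
  then obtain R where "\<And>z. R \<le> norm z \<Longrightarrow> K < \<phi> z / norm z"
    unfolding eventually_at_infinity by blast
  then have "\<phi> z / norm z \<le> K \<Longrightarrow> norm z \<le> R" for z
    by (meson not_le less_imp_le)
  then show ?thesis by blast
qed

lemma phi_support_bounded:
  fixes \<phi> f :: "'a::euclidean_space \<Rightarrow> real"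
  assumes "continuous_on UNIV f" and "convex_on UNIV \<phi>" and "super_coercive \<phi>"
  shows "\<exists>R. \<forall>z. phi_support \<phi> f xb \<epsilon> z \<longrightarrow> norm z \<le> R"
proof -
  have "bounded (f ` cball xb 1)"
    by (intro compact_imp_bounded compact_continuous_image continuous_on_subset[OF assms(1)]) auto
  then obtain M where M: "\<And>x. x \<in> cball xb 1 \<Longrightarrow> \<bar>f x\<bar> \<le> M"
    unfolding bounded_iff by (metis image_eqI real_norm_def)
  obtain R where R: "\<And>z. \<phi> z / norm z \<le> 2 * M + \<epsilon> + \<bar>\<phi> 0\<bar> \<Longrightarrow> norm z \<le> R"
    using super_coercive_bounded[OF assms(3)] by blast
  have "norm z \<le> max R 1" if support: "phi_support \<phi> f xb \<epsilon> z" for z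
  proof (cases "norm z \<le> 1")
    case False
    define u where "u = z /\<^sub>R norm z"
    have "xb - u \<in> cball xb 1"
      using False by (auto simp: u_def dist_norm field_simps)
    then have "\<bar>f (xb - u)\<bar> \<le> M" and "\<bar>f xb\<bar> \<le> M"
      using M by auto
    moreover have "f xb - \<phi> (xb - u - xb + z) + \<phi> z - \<epsilon> \<le> f (xb - u)"
      using support unfolding phi_support_def by blast
    then have "f xb - \<phi> (z - u) + \<phi> z - \<epsilon> \<le> f (xb - u)"
      by simp
    ultimately have "\<phi> z - \<phi> (z - u) \<le> 2 * M + \<epsilon>"
      by linarith
    then have "\<phi> z / norm z \<le> 2 * M + \<epsilon> + \<bar>\<phi> 0\<bar>"
      using convex_on_slope_le[OF assms(2), of z] False unfolding u_def by linarith
    then show ?thesis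
      using R by fastforce
  qed simp
  then show ?thesis by blast
qed

lemma phi_support_limit:
  fixes \<phi> f :: "'a::real_normed_vector \<Rightarrow> real"
  assumes "continuous_on UNIV \<phi>" and "zs \<longlonglongrightarrow> z" and "\<epsilon>s \<longlonglongrightarrow> 0"
    and "\<And>k. phi_support \<phi> f xb (\<epsilon>s k) (zs k)"
  shows "phi_support \<phi> f xb 0 z"
  unfolding phi_support_def
proof
  fix x
  have "(\<lambda>k. f xb - \<phi> (x - xb + zs k) + \<phi> (zs k) - \<epsilon>s k) \<longlonglongrightarrow> f xb - \<phi> (x - xb + z) + \<phi> z - 0"
    by (intro tendsto_intros continuous_on_tendsto_compose[OF assms(1)] assms(2,3)) auto
  moreover have "\<forall>k. f xb - \<phi> (x - xb + zs k) + \<phi> (zs k) - \<epsilon>s k \<le> f x"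
    using assms(4) unfolding phi_support_def by blast
  ultimately show "f xb - \<phi> (x - xb + z) + \<phi> z - 0 \<le> f x"
    by (intro LIMSEQ_le_const2) auto
qed

lemma left_Phi_convex_imp_phi_support:
  fixes \<phi> f :: "'a::euclidean_space \<Rightarrow> real"
  assumes "left_Phi_convex (Phi \<phi>) f" and "continuous_on UNIV f"
    and "convex_on UNIV \<phi>" and "super_coercive \<phi>"
  shows "\<exists>z. phi_support \<phi> f xb 0 z"
proof -
  define \<epsilon>s where "\<epsilon>s k = inverse (real (Suc k))" for k
  have "\<forall>k. \<exists>z. phi_support \<phi> f xb (\<epsilon>s k) z"
    using left_Phi_convex_imp_approx_phi_support[OF assms(1)] by (simp add: \<epsilon>s_def)
  then obtain zs where zs: "\<And>k. phi_support \<phi> f xb (\<epsilon>s k) (zs k)"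
    by metis
  obtain R where R: "\<And>z. phi_support \<phi> f xb 1 z \<Longrightarrow> norm z \<le> R"
    using phi_support_bounded[OF assms(2-4)] by blast
  have "\<forall>k. zs k \<in> cball 0 R"
    using R[OF phi_support_mono[OF zs]] by (simp add: \<epsilon>s_def field_simps)
  then obtain z r where r: "strict_mono r" and "(zs \<circ> r) \<longlonglongrightarrow> z"
    using seq_compactE[OF compact_imp_seq_compact[OF compact_cball]] by blast
  moreover have "(\<epsilon>s \<circ> r) \<longlonglongrightarrow> 0"
    using LIMSEQ_subseq_LIMSEQ[OF LIMSEQ_inverse_real_of_nat r] by (simp add: \<epsilon>s_def o_def)
  moreover have "continuous_on UNIV \<phi>"
    using convex_on_continuous[OF open_UNIV assms(3)] .
  ultimately have "phi_support \<phi> f xb 0 z"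
    using zs by (intro phi_support_limit[of \<phi> "zs \<circ> r" z "\<epsilon>s \<circ> r"]) auto
  then show ?thesis ..
qed

lemma phi_support_grad:
  fixes \<phi> f :: "'a::euclidean_space \<Rightarrow> real"
  assumes f': "(f has_derivative (\<lambda>h. g \<bullet> h)) (at xb)" and "\<phi> differentiable (at z)"
    and "phi_support \<phi> f xb 0 z"
  shows "g = - grad \<phi> z"
proof -
  define F where "F y = f y + \<phi> (y - xb + z)" for y
  have "((\<lambda>y. \<phi> (y - xb + z)) has_derivative (\<lambda>h. grad \<phi> z \<bullet> h)) (at xb)"
    using grad_has_derivative[OF assms(2)]
    by (auto intro!: derivative_eq_intros has_derivative_compose[of "\<lambda>y. y - xb + z" _ _ _ \<phi>])
  then have "(F has_derivative (\<lambda>h. (g + grad \<phi> z) \<bullet> h)) (at xb)"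
    unfolding F_def using f' by (auto intro!: derivative_eq_intros simp: inner_add_left)
  moreover have "\<forall>\<^sub>F y in at xb. F xb \<le> F y"
    using assms(3) by (simp add: phi_support_def F_def algebra_simps)
  ultimately have "(\<lambda>h. (g + grad \<phi> z) \<bullet> h) = (\<lambda>h. 0)"
    by (rule has_derivative_local_min)
  then have "(g + grad \<phi> z) \<bullet> (g + grad \<phi> z) = 0"
    by (rule fun_cong)
  then show ?thesis
    by (simp add: eq_neg_iff_add_eq_0)
qed

lemma standing_grad_fconj_grad:
  assumes "standing \<phi>"
  shows "grad (fconj \<phi>) (grad \<phi> z) = z"
  using assms unfolding standing_def by (simp add: bij_is_inj)

theorem mainTheorem12:
  fixes \<phi> f :: "'a::euclidean_space \<Rightarrow> real"
  assumes "standing \<phi>"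
    and "\<exists>g. (\<forall>x. (f has_derivative (\<lambda>h. g x \<bullet> h)) (at x)) \<and> continuous_on UNIV g"
  shows "a_weakly_convex \<phi> f \<longleftrightarrow> left_Phi_convex (Phi \<phi>) f"
proof -
  obtain g where f': "\<forall>x. (f has_derivative (\<lambda>h. g x \<bullet> h)) (at x)"
    and g_cont: "continuous_on UNIV g"
    using assms(2) by blast
  have aw_iff: "a_weakly_convex \<phi> f \<longleftrightarrow> (\<forall>xb. phi_support \<phi> f xb 0 (grad (fconj \<phi>) (- g xb)))"
    unfolding a_weakly_convex_iff_phi_support limiting_subdiff_continuous_grad[OF f' g_cont] by simp
  have f_cont: "continuous_on UNIV f"
    using f' by (meson continuous_at_imp_continuous_on has_derivative_continuous)
  have \<phi>_convex: "convex_on UNIV \<phi>" and \<phi>_coercive: "super_coercive \<phi>"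
    and \<phi>': "\<And>z. \<phi> differentiable (at z)"
    using assms(1) unfolding standing_def legendre_full_def by simp_all
  show ?thesis
  proof
    assume "a_weakly_convex \<phi> f"
    then show "left_Phi_convex (Phi \<phi>) f"
      unfolding aw_iff by (rule left_Phi_convex_if_phi_support)
  next
    assume f_Phi_convex: "left_Phi_convex (Phi \<phi>) f"
    have "phi_support \<phi> f xb 0 (grad (fconj \<phi>) (- g xb))" for xb
    proof -
      obtain z where z: "phi_support \<phi> f xb 0 z"
        using left_Phi_convex_imp_phi_support[OF f_Phi_convex f_cont \<phi>_convex \<phi>_coercive] by blast
      moreover have "- g xb = grad \<phi> z"
        using phi_support_grad[OF f'[rule_format] \<phi>' z] by simp
      ultimately show ?thesis
        using standing_grad_fconj_grad[OF assms(1)] by simp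
    qed
    then show "a_weakly_convex \<phi> f"
      unfolding aw_iff ..
  qed
qed

end
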